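(* Let $\odot$ be a pseudo-multiplication on $[0,\infty]$ with left identity $1_{\odot}$, and let $F_{\odot}$ be the set of $\odot$-finite elements. Then $F_{\odot}$ is either $\{0\}$, or $[0,\infty]$, or of the form $[0,\phi)$ for some $\phi\in(1_{\odot},\infty]$ such that $O(\phi)=\phi$.
   Context: A pseudo-multiplication is a binary operation $\odot:[0,\infty]\times[0,\infty]\to[0,\infty]$ such that: $\odot$ is associative; $\odot$ is continuous on $(0,\infty)\times[0,\infty]$; for every $t$, the map $s\mapsto s\odot t$ is continuous on $(0,\infty]$; $\odot$ is nondecreasing in each argument; there is a left identity element $1_{\odot}$, i.e. $1_{\odot}\odot t=t$ for all $t$; there are no zero divisors, i.e. $s\odot t=0$ implies $s=0$ or $t=0$; and $0$ is an annihilator, i.e. $0\odot t=t\odot 0=0$ for all $t$. For $t\in[0,\infty]$ put $O(t)=\inf_{s>0} s\odot t$. An element $t$ is called $\odot$-finite if $O(t)=0$, and $\odot$-infinite otherwise. *)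

theory Defs
  imports "HOL-Analysis.Analysis"
begin

definition pseudo_mult :: "(ennreal \<Rightarrow> ennreal \<Rightarrow> ennreal) \<Rightarrow> ennreal \<Rightarrow> bool" where
  "pseudo_mult f e \<longleftrightarrow>
     (\<forall>a b c. f (f a b) c = f a (f b c)) \<and>
     continuous_on ({0<..<\<infinity>} \<times> UNIV) (\<lambda>(s, t). f s t) \<and>
     (\<forall>t. continuous_on {0<..} (\<lambda>s. f s t)) \<and>
     (\<forall>t. mono (\<lambda>s. f s t)) \<and> (\<forall>s. mono (\<lambda>t. f s t)) \<and>
     (\<forall>t. f e t = t) \<and>
     (\<forall>s t. f s t = 0 \<longrightarrow> s = 0 \<or> t = 0) \<and>
     (\<forall>t. f 0 t = 0 \<and> f t 0 = 0)"

definition pm_O :: "(ennreal \<Rightarrow> ennreal \<Rightarrow> ennreal) \<Rightarrow> ennreal \<Rightarrow> ennreal" where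
  "pm_O f t = (INF s\<in>{0<..}. f s t)"

definition pm_finite_set :: "(ennreal \<Rightarrow> ennreal \<Rightarrow> ennreal) \<Rightarrow> ennreal set" where
  "pm_finite_set f = {t. pm_O f t = 0}"

end

theory Submission
  imports Defs
begin

text \<open>Call c absorbing if s \<odot> c = c for every finite s > 0. By right continuity of
  \<odot> and associativity, every O(t) is absorbing, and an absorbing c satisfies O(c) = c.
  Hence t is \<odot>-finite exactly when it lies strictly below every positive absorbing
  element. Since an infimum of absorbing elements is again absorbing, the finite set is
  [0,\<infinity>] (no such element), {0} (their infimum is 0), or [0,\<phi>) with \<phi> their infimum,
  which is absorbing, so O(\<phi>) = \<phi>. Finally \<phi> exceeds the identity e: a finite t > 0
  gives O(e) \<odot> t = O(t) = 0 by left continuity, so O(e) = 0.\<close>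

lemma Inf_greaterThan_zero: "Inf {0<..} = (0::ennreal)"
proof (rule antisym[OF dense_ge])
  fix y :: ennreal assume "0 < y"
  then show "Inf {0<..} \<le> y" by (simp add: Inf_lower)
qed simp

lemma below_all_eq_lessThan_Inf:
  fixes P :: "'a::complete_lattice set"
  assumes "Inf P \<in> P"
  shows "{t. \<forall>c\<in>P. t < c} = {..<Inf P}"
  using assms by (auto intro: less_le_trans Inf_lower)

lemma below_all_eq_bot:
  fixes P :: "'a::complete_linorder set"
  assumes "Inf P = bot" "bot \<notin> P"
  shows "{t. \<forall>c\<in>P. t < c} = {bot}"
proof (intro set_eqI iffI)
  fix t assume t: "t \<in> {t. \<forall>c\<in>P. t < c}"
  show "t \<in> {bot}"
  proof (rule ccontr)
    assume "t \<notin> {bot}"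
    then have "Inf P < t" using assms(1) by (metis bot.not_eq_extremum singletonI)
    then obtain c where "c \<in> P" "c < t" by (auto simp: Inf_less_iff)
    with t show False by (auto dest: less_asym)
  qed
next
  fix t :: 'a assume "t \<in> {bot}"
  then show "t \<in> {t. \<forall>c\<in>P. t < c}"
    using assms(2) bot.not_eq_extremum by fastforce
qed

locale pseudo_multiplication =
  fixes f :: "ennreal \<Rightarrow> ennreal \<Rightarrow> ennreal" (infixl "\<odot>" 70) and e :: ennreal
  assumes pseudo_mult: "pseudo_mult f e"
begin

lemma assoc: "(a \<odot> b) \<odot> c = a \<odot> (b \<odot> c)"
  and continuous_on_joint: "continuous_on ({0<..<\<infinity>} \<times> UNIV) (\<lambda>(s, t). s \<odot> t)"
  and continuous_on_left: "continuous_on {0<..} (\<lambda>s. s \<odot> t)"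
  and mono_left: "mono (\<lambda>s. s \<odot> t)"
  and mono_right: "mono (\<lambda>t. s \<odot> t)"
  and left_identity: "e \<odot> t = t"
  and no_zero_divisors: "s \<odot> t = 0 \<Longrightarrow> s = 0 \<or> t = 0"
  and zero_left: "0 \<odot> t = 0"
  and zero_right: "t \<odot> 0 = 0"
  using pseudo_mult unfolding pseudo_mult_def by simp_all

lemma continuous_on_right:
  assumes "0 < s" "s < \<infinity>"
  shows "continuous_on UNIV ((\<odot>) s)"
proof -
  have "continuous_on UNIV (\<lambda>t. (\<lambda>(s, t). s \<odot> t) (s, t))"
    by (rule continuous_on_compose2[OF continuous_on_joint])
      (use assms in \<open>auto intro!: continuous_intros\<close>)
  then show ?thesis by simp
qed

lemma right_Inf:
  assumes "0 < s" "s < \<infinity>" "S \<noteq> {}"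
  shows "s \<odot> Inf S = (INF t\<in>S. s \<odot> t)"
proof (rule continuous_at_Inf_mono)
  show "mono ((\<odot>) s)" using mono_right by (simp add: mono_def)
  show "continuous (at_right (Inf S)) ((\<odot>) s)"
    using continuous_on_right[OF assms(1,2)]
    by (simp add: continuous_on_eq_continuous_at continuous_at_imp_continuous_at_within)
qed (use assms in auto)

lemma left_Inf:
  assumes "0 < Inf S" "S \<noteq> {}"
  shows "Inf S \<odot> t = (INF s\<in>S. s \<odot> t)"
proof (rule continuous_at_Inf_mono[where f = "\<lambda>s. s \<odot> t"])
  have "continuous (at (Inf S) within {0<..}) (\<lambda>s. s \<odot> t)"
    using continuous_on_left assms(1) by (simp add: continuous_on_eq_continuous_within)
  then show "continuous (at_right (Inf S)) (\<lambda>s. s \<odot> t)"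
    by (rule continuous_within_subset) (use assms(1) in auto)
qed (use mono_left assms in auto)

lemma identity_pos: "0 < e"
proof (rule ccontr)
  assume "\<not> 0 < e"
  then have "e \<odot> 1 = 0 \<odot> 1" by simp
  then show False by (simp add: left_identity zero_left)
qed

lemma pm_O_le: "pm_O f t \<le> t"
proof -
  have "pm_O f t \<le> e \<odot> t"
    unfolding pm_O_def by (rule INF_lower) (use identity_pos in auto)
  then show ?thesis by (simp add: left_identity)
qed

lemma pm_O_mono: "u \<le> t \<Longrightarrow> pm_O f u \<le> pm_O f t"
  unfolding pm_O_def by (rule INF_mono) (use mono_right in \<open>auto simp: mono_def\<close>)

definition absorbing :: "ennreal \<Rightarrow> bool" where
  "absorbing c \<longleftrightarrow> (\<forall>s\<in>{0<..<\<infinity>}. s \<odot> c = c)"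

lemma absorbing_pm_O: "absorbing (pm_O f t)"
  unfolding absorbing_def
proof
  fix s :: ennreal assume s: "s \<in> {0<..<\<infinity>}"
  have "s \<odot> pm_O f t = (INF r\<in>{0<..}. s \<odot> (r \<odot> t))"
    unfolding pm_O_def using s by (subst right_Inf) (auto simp: image_image)
  also have "\<dots> = (INF r\<in>{0<..}. (s \<odot> r) \<odot> t)"
    by (simp add: assoc)
  also have "\<dots> = pm_O f t"
    unfolding pm_O_def
  proof (rule antisym; rule INF_mono)
    fix r' :: ennreal assume "r' \<in> {0<..}"
    moreover have "(INF r\<in>{0<..}. s \<odot> r) = 0"
      using right_Inf[of s "{0<..}"] s by (auto simp: Inf_greaterThan_zero zero_right)
    ultimately have "(INF r\<in>{0<..}. s \<odot> r) < r'" by simp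
    then obtain r where "0 < r" "s \<odot> r < r'"
      by (auto simp: INF_less_iff)
    then show "\<exists>r\<in>{0<..}. (s \<odot> r) \<odot> t \<le> r' \<odot> t"
      using mono_left by (auto simp: mono_def intro!: bexI[of _ r])
  next
    fix r :: ennreal assume "r \<in> {0<..}"
    then have "s \<odot> r \<in> {0<..}"
      using no_zero_divisors[of s r] s by (auto simp: zero_less_iff_neq_zero)
    then show "\<exists>r'\<in>{0<..}. r' \<odot> t \<le> (s \<odot> r) \<odot> t" by blast
  qed
  finally show "s \<odot> pm_O f t = pm_O f t" .
qed

lemma pm_O_absorbing:
  assumes "absorbing c"
  shows "pm_O f c = c"
proof (rule antisym[OF pm_O_le])
  show "c \<le> pm_O f c"
    unfolding pm_O_def
  proof (rule INF_greatest)
    fix s :: ennreal assume "s \<in> {0<..}"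
    then have "min s 1 \<in> {0<..<\<infinity>}"
      by (auto simp: min_def intro: le_less_trans[OF _ ennreal_one_less_top])
    then have "c = min s 1 \<odot> c" using assms by (simp add: absorbing_def)
    also have "\<dots> \<le> s \<odot> c" using mono_left by (simp add: mono_def)
    finally show "c \<le> s \<odot> c" .
  qed
qed

lemma absorbing_Inf:
  assumes "S \<noteq> {}" "\<And>c. c \<in> S \<Longrightarrow> absorbing c"
  shows "absorbing (Inf S)"
  unfolding absorbing_def
proof
  fix s :: ennreal assume "s \<in> {0<..<\<infinity>}"
  then have "s \<odot> Inf S = (INF c\<in>S. s \<odot> c)" using right_Inf assms(1) by simp
  also have "\<dots> = Inf S"
    using \<open>s \<in> _\<close> assms(2) by (simp add: absorbing_def)
  finally show "s \<odot> Inf S = Inf S" .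
qed

lemma finite_iff_below_absorbing:
  "t \<in> pm_finite_set f \<longleftrightarrow> (\<forall>c. 0 < c \<and> absorbing c \<longrightarrow> t < c)"
proof
  assume "t \<in> pm_finite_set f"
  then have fin: "pm_O f t = 0" by (simp add: pm_finite_set_def)
  show "\<forall>c. 0 < c \<and> absorbing c \<longrightarrow> t < c"
  proof (intro allI impI)
    fix c assume c: "0 < c \<and> absorbing c"
    show "t < c"
    proof (rule ccontr)
      assume "\<not> t < c"
      then have "pm_O f c \<le> pm_O f t" by (simp add: pm_O_mono)
      then show False using c fin pm_O_absorbing by simp
    qed
  qed
next
  assume below: "\<forall>c. 0 < c \<and> absorbing c \<longrightarrow> t < c"
  show "t \<in> pm_finite_set f"
  proof (rule ccontr)
    assume "t \<notin> pm_finite_set f"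
    then have "0 < pm_O f t" by (simp add: pm_finite_set_def zero_less_iff_neq_zero)
    then have "t < pm_O f t" using below absorbing_pm_O by blast
    then show False using pm_O_le by (simp add: not_less[symmetric])
  qed
qed

lemma pm_O_identity_if_finite:
  assumes "pm_O f t = 0" "0 < t"
  shows "pm_O f e = 0"
proof (rule ccontr)
  assume "pm_O f e \<noteq> 0"
  then have "pm_O f e \<odot> t = (INF s\<in>{0<..}. (s \<odot> e) \<odot> t)"
    unfolding pm_O_def by (subst left_Inf) (auto simp: image_image zero_less_iff_neq_zero)
  also have "\<dots> = pm_O f t" by (simp add: assoc left_identity pm_O_def)
  finally show False
    using assms no_zero_divisors[of "pm_O f e" t] \<open>pm_O f e \<noteq> 0\<close> by simp
qed

lemma identity_less:
  assumes "pm_finite_set f = {..<\<phi>}" "0 < \<phi>"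
  shows "e < \<phi>"
proof -
  obtain t where "0 < t" "t < \<phi>" using dense[OF assms(2)] by blast
  then have "pm_O f e = 0"
    using assms(1) pm_O_identity_if_finite by (auto simp: pm_finite_set_def set_eq_iff)
  then show ?thesis using assms(1) by (auto simp: pm_finite_set_def set_eq_iff)
qed

end

theorem lemma2p5:
  fixes f :: "ennreal \<Rightarrow> ennreal \<Rightarrow> ennreal" and e :: ennreal
  assumes "pseudo_mult f e"
  shows "pm_finite_set f = {0} \<or> pm_finite_set f = UNIV \<or>
    (\<exists>\<phi>. e < \<phi> \<and> pm_finite_set f = {..<\<phi>} \<and> pm_O f \<phi> = \<phi>)"
proof -
  interpret pseudo_multiplication f e by (fact pseudo_multiplication.intro[OF assms])
  define P where "P = {c. 0 < c \<and> absorbing c}"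
  have F: "pm_finite_set f = {t. \<forall>c\<in>P. t < c}"
    by (auto simp: finite_iff_below_absorbing P_def)
  consider "P = {}" | "Inf P = 0" | "P \<noteq> {}" "0 < Inf P"
    using zero_less_iff_neq_zero by blast
  then show ?thesis
  proof cases
    case 1
    then show ?thesis using F by simp
  next
    case 2
    then have "pm_finite_set f = {0}"
      unfolding F using below_all_eq_bot[of P] 2 by (simp add: P_def bot_ennreal)
    then show ?thesis by simp
  next
    case 3
    have "absorbing (Inf P)" using 3 by (intro absorbing_Inf) (auto simp: P_def)
    then have "Inf P \<in> P" using 3 by (simp add: P_def)
    then have F_Inf: "pm_finite_set f = {..<Inf P}"
      unfolding F by (rule below_all_eq_lessThan_Inf)
    moreover have "pm_O f (Inf P) = Inf P"
      using \<open>Inf P \<in> P\<close> pm_O_absorbing by (simp add: P_def)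
    ultimately show ?thesis using identity_less 3 by blast
  qed
qed

end
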